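(* For every $n\ge1$, the number of matrices $A\in\mathbb{R}^{n\times n}$ with all rows of Euclidean norm $1$ that maximize $\beta(A)$ over all such matrices is at most $2^{n\cdot 2^n}$.
   Context: For $A\in\mathbb{R}^{m\times n}$, $\beta(A)=\frac{1}{2^n}\sum_{x\in\{-1,1\}^n}\|Ax\|_\infty$. *)

theory Defs
  imports "HOL-Analysis.Analysis"
begin

definition sign_vectors :: "(real^'n) set" where
  "sign_vectors = {x. \<forall>i. x $ i \<in> {-1, 1}}"

definition inf_norm :: "real^'m \<Rightarrow> real" where
  "inf_norm y = Max (range (\<lambda>i. \<bar>y $ i\<bar>))"

definition beta :: "real^'n^'m \<Rightarrow> real" where
  "beta A = (1 / 2 ^ CARD('n)) * (\<Sum>x\<in>sign_vectors. inf_norm (A *v x))"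

definition unit_rows :: "real^'n^'m \<Rightarrow> bool" where
  "unit_rows A \<longleftrightarrow> (\<forall>i. norm (A $ i) = 1)"

end

theory Submission imports Defs begin

text \<open>
  For a matrix \<open>A\<close>, record for every sign vector \<open>x\<close> a row \<open>i\<close> attaining \<open>\<parallel>Ax\<parallel>\<^sub>\<infinity>\<close> and the
  sign \<open>\<sigma>\<close> of \<open>A\<^sub>i \<bullet> x\<close>, and put \<open>v\<^sub>i = \<Sum> \<sigma> x\<close> over the sign vectors assigned to row \<open>i\<close>.
  Then \<open>\<Sum>\<^sub>x \<parallel>Bx\<parallel>\<^sub>\<infinity> \<ge> \<Sum>\<^sub>i B\<^sub>i \<bullet> v\<^sub>i\<close> for every \<open>B\<close>, with equality at \<open>B = A\<close>. If \<open>A\<close> maximises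
  \<open>\<beta>\<close> among matrices with unit rows, comparing with \<open>B\<^sub>i = v\<^sub>i / \<parallel>v\<^sub>i\<parallel>\<close> and using the equality
  case of Cauchy-Schwarz gives \<open>A\<^sub>i = v\<^sub>i / \<parallel>v\<^sub>i\<parallel>\<close>, provided no \<open>v\<^sub>i\<close> vanishes; if one did,
  row \<open>i\<close> could be replaced freely, which is impossible. So a maximiser is determined by
  its pattern, a map from the \<open>2\<^sup>n\<close> sign vectors to the \<open>2n\<close> pairs \<open>(i, \<sigma>)\<close>.
\<close>

lemma sign_vectors_eq_image:
  "(sign_vectors :: (real^'n::finite) set) = (\<lambda>T. \<chi> i. if i \<in> T then 1 else -1) ` UNIV"
  (is "_ = ?g ` UNIV")
proof
  show "sign_vectors \<subseteq> ?g ` UNIV"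
  proof
    fix x :: "real^'n" assume "x \<in> sign_vectors"
    then have "x = ?g {i. x $ i = 1}"
      by (auto simp: sign_vectors_def vec_eq_iff)
    then show "x \<in> ?g ` UNIV" by blast
  qed
qed (auto simp: sign_vectors_def)

lemma finite_sign_vectors [simp]: "finite (sign_vectors :: (real^'n::finite) set)"
  by (simp add: sign_vectors_eq_image)

lemma card_sign_vectors: "card (sign_vectors :: (real^'n::finite) set) = 2 ^ CARD('n)"
proof -
  let ?g = "\<lambda>T::'n set. (\<chi> i. if i \<in> T then 1 else -1) :: real^'n"
  have "inj ?g"
  proof (rule injI)
    fix S T :: "'n set"
    assume eq: "?g S = ?g T"
    show "S = T"
    proof (rule set_eqI)
      fix i
      have "?g S $ i = ?g T $ i" using eq by simp
      then have "(if i \<in> S then 1 else -1::real) = (if i \<in> T then 1 else -1)" by simp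
      then show "i \<in> S \<longleftrightarrow> i \<in> T" by (cases "i \<in> S"; cases "i \<in> T") auto
    qed
  qed
  then show ?thesis
    by (simp add: sign_vectors_eq_image card_image card_Pow)
qed

lemma norm_sign_vector:
  fixes x :: "real^'n::finite"
  assumes "x \<in> sign_vectors"
  shows "norm x = sqrt (real CARD('n))"
proof -
  have "x $ i * x $ i = 1" for i
  proof -
    have "x $ i \<in> {-1, 1}" using assms by (simp add: sign_vectors_def)
    then show ?thesis by auto
  qed
  then show ?thesis by (simp add: norm_eq_sqrt_inner inner_vec_def)
qed

lemma double_le_two_power: "2 * n \<le> (2::nat) ^ n"
proof (induction n)
  case (Suc n)
  moreover have "n = 0 \<or> 2 \<le> (2::nat) ^ n" by (cases n) auto
  ultimately show ?case by auto
qed simp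

lemma abs_le_inf_norm: "\<bar>y $ j\<bar> \<le> inf_norm y"
  unfolding inf_norm_def by (rule Max_ge) auto

lemma inf_norm_attained: "\<exists>i. inf_norm y = \<bar>y $ i\<bar>"
proof -
  have "inf_norm y \<in> range (\<lambda>i. \<bar>y $ i\<bar>)" unfolding inf_norm_def by (rule Max_in) auto
  then show ?thesis by auto
qed

lemma abs_row_inner_le_inf_norm: "\<bar>B $ j \<bullet> x\<bar> \<le> inf_norm (B *v x)"
  using abs_le_inf_norm[of "B *v x" j] by (simp add: matrix_mult_dot)

definition max_row :: "real^'n^'m \<Rightarrow> real^'n \<Rightarrow> 'm" where
  "max_row A x = (SOME i. \<forall>j. \<bar>A $ j \<bullet> x\<bar> \<le> \<bar>A $ i \<bullet> x\<bar>)"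

definition max_row_sign :: "real^'n^'m \<Rightarrow> real^'n \<Rightarrow> real" where
  "max_row_sign A x = (if 0 \<le> A $ max_row A x \<bullet> x then 1 else -1)"

lemma abs_inner_le_max_row: "\<bar>A $ j \<bullet> x\<bar> \<le> \<bar>A $ max_row A x \<bullet> x\<bar>"
proof -
  obtain i where i: "inf_norm (A *v x) = \<bar>(A *v x) $ i\<bar>"
    using inf_norm_attained by blast
  have "\<forall>j. \<bar>A $ j \<bullet> x\<bar> \<le> \<bar>A $ i \<bullet> x\<bar>"
    using i abs_row_inner_le_inf_norm[of A _ x] by (simp add: matrix_mult_dot)
  then have "\<exists>i. \<forall>j. \<bar>A $ j \<bullet> x\<bar> \<le> \<bar>A $ i \<bullet> x\<bar>" ..
  from someI_ex[OF this] show ?thesis unfolding max_row_def by blast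
qed

lemma inf_norm_eq_max_row: "inf_norm (A *v x) = \<bar>A $ max_row A x \<bullet> x\<bar>"
proof -
  obtain i where "inf_norm (A *v x) = \<bar>(A *v x) $ i\<bar>"
    using inf_norm_attained by blast
  then show ?thesis
    using abs_inner_le_max_row[of A i x] abs_row_inner_le_inf_norm[of A "max_row A x" x]
    by (simp add: matrix_mult_dot)
qed

text \<open>The pattern is restricted to the sign vectors so that it is an element of a finite
  \<open>PiE\<close> set.\<close>
definition sign_pattern :: "real^'n^'m \<Rightarrow> real^'n \<Rightarrow> 'm \<times> real" where
  "sign_pattern A = restrict (\<lambda>x. (max_row A x, max_row_sign A x)) sign_vectors"

definition pattern_vector :: "(real^'n \<Rightarrow> 'm \<times> real) \<Rightarrow> 'm \<Rightarrow> real^'n" where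
  "pattern_vector f i = (\<Sum>x\<in>{x\<in>sign_vectors. fst (f x) = i}. snd (f x) *\<^sub>R x)"

definition pattern_matrix :: "(real^'n \<Rightarrow> 'm \<times> real) \<Rightarrow> real^'n^'m" where
  "pattern_matrix f = (\<chi> i. sgn (pattern_vector f i))"

definition beta_maximizer :: "real^'n^'m \<Rightarrow> bool" where
  "beta_maximizer A \<longleftrightarrow> unit_rows A \<and> (\<forall>B :: real^'n^'m. unit_rows B \<longrightarrow> beta B \<le> beta A)"

lemma sign_pattern_in_PiE:
  "sign_pattern A \<in> PiE sign_vectors (\<lambda>_. UNIV \<times> {-1, 1})"
  unfolding sign_pattern_def by (subst restrict_PiE_iff) (auto simp: max_row_sign_def)

lemma sum_inner_pattern_vector:
  fixes B :: "real^'n::finite^'m::finite"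
  shows "(\<Sum>i\<in>UNIV. B $ i \<bullet> pattern_vector f i)
       = (\<Sum>x\<in>sign_vectors. snd (f x) * (B $ fst (f x) \<bullet> x))"
proof -
  have "(\<Sum>i\<in>UNIV. B $ i \<bullet> pattern_vector f i)
      = (\<Sum>i\<in>UNIV. \<Sum>x\<in>{x\<in>sign_vectors. fst (f x) = i}. snd (f x) * (B $ fst (f x) \<bullet> x))"
    unfolding pattern_vector_def by (auto simp: inner_sum_right intro!: sum.cong)
  also have "\<dots> = (\<Sum>x\<in>sign_vectors. snd (f x) * (B $ fst (f x) \<bullet> x))"
    by (rule sum.group) auto
  finally show ?thesis .
qed

lemma sign_pattern_inner_le_inf_norm:
  assumes "x \<in> sign_vectors"
  shows "snd (sign_pattern A x) * (B $ fst (sign_pattern A x) \<bullet> x) \<le> inf_norm (B *v x)"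
proof -
  have "max_row_sign A x * (B $ max_row A x \<bullet> x) \<le> \<bar>B $ max_row A x \<bullet> x\<bar>"
    by (auto simp: max_row_sign_def)
  also have "\<dots> \<le> inf_norm (B *v x)" by (rule abs_row_inner_le_inf_norm)
  finally show ?thesis using assms by (simp add: sign_pattern_def)
qed

lemma sum_inner_pattern_vector_le:
  fixes A B :: "real^'n::finite^'m::finite"
  shows "(\<Sum>i\<in>UNIV. B $ i \<bullet> pattern_vector (sign_pattern A) i)
       \<le> (\<Sum>x\<in>sign_vectors. inf_norm (B *v x))"
  unfolding sum_inner_pattern_vector by (intro sum_mono sign_pattern_inner_le_inf_norm)

lemma sum_inner_pattern_vector_self:
  fixes A :: "real^'n::finite^'m::finite"
  shows "(\<Sum>i\<in>UNIV. A $ i \<bullet> pattern_vector (sign_pattern A) i)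
       = (\<Sum>x\<in>sign_vectors. inf_norm (A *v x))"
  unfolding sum_inner_pattern_vector
  by (intro sum.cong refl) (simp add: sign_pattern_def inf_norm_eq_max_row max_row_sign_def)

lemma beta_le_beta_iff:
  fixes A B :: "real^'n::finite^'m"
  shows "beta B \<le> beta A
     \<longleftrightarrow> (\<Sum>x\<in>sign_vectors. inf_norm (B *v x)) \<le> (\<Sum>x\<in>sign_vectors. inf_norm (A *v x))"
  by (simp add: beta_def divide_le_cancel)

lemma beta_maximizer_pattern_tight:
  fixes A B :: "real^'n::finite^'m::finite"
  assumes A: "beta_maximizer A" and B: "unit_rows B"
    and AB: "(\<Sum>i\<in>UNIV. A $ i \<bullet> pattern_vector (sign_pattern A) i)
       \<le> (\<Sum>i\<in>UNIV. B $ i \<bullet> pattern_vector (sign_pattern A) i)"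
    and x: "x \<in> sign_vectors"
  shows "snd (sign_pattern A x) * (B $ fst (sign_pattern A x) \<bullet> x) = inf_norm (B *v x)"
proof (rule ccontr)
  assume "\<not> ?thesis"
  then have "snd (sign_pattern A x) * (B $ fst (sign_pattern A x) \<bullet> x) < inf_norm (B *v x)"
    using sign_pattern_inner_le_inf_norm[OF x] by (simp add: order_less_le)
  then have "(\<Sum>x\<in>sign_vectors. snd (sign_pattern A x) * (B $ fst (sign_pattern A x) \<bullet> x))
           < (\<Sum>x\<in>sign_vectors. inf_norm (B *v x))"
    using x sign_pattern_inner_le_inf_norm by (intro sum_strict_mono_ex1) auto
  also have "\<dots> \<le> (\<Sum>x\<in>sign_vectors. inf_norm (A *v x))"
    using A B by (simp add: beta_maximizer_def flip: beta_le_beta_iff)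
  finally have "(\<Sum>x\<in>sign_vectors. snd (sign_pattern A x) * (B $ fst (sign_pattern A x) \<bullet> x))
      < (\<Sum>x\<in>sign_vectors. inf_norm (A *v x))" .
  moreover have "(\<Sum>x\<in>sign_vectors. inf_norm (A *v x))
      \<le> (\<Sum>x\<in>sign_vectors. snd (sign_pattern A x) * (B $ fst (sign_pattern A x) \<bullet> x))"
    using AB unfolding sum_inner_pattern_vector_self sum_inner_pattern_vector .
  ultimately show False by linarith
qed

text \<open>By Cauchy-Schwarz, \<open>\<bar>A\<^sub>j \<bullet> x\<bar> = \<surd>n\<close> forces \<open>x = \<plusminus>\<surd>n A\<^sub>j\<close>, so at most \<open>2(m - 1)\<close> sign
  vectors are excluded, fewer than \<open>2\<^sup>n\<close>.\<close>
lemma exists_sign_vector_small_off_row: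
  fixes A :: "real^'n::finite^'m::finite"
  assumes "unit_rows A" "CARD('m) \<le> CARD('n)"
  shows "\<exists>x\<in>sign_vectors. \<forall>j. j \<noteq> i \<longrightarrow> \<bar>A $ j \<bullet> x\<bar> < sqrt (real CARD('n))"
proof (rule ccontr)
  let ?r = "sqrt (real CARD('n))"
  let ?excluded = "(\<lambda>(j, \<sigma>). \<sigma> *\<^sub>R (?r *\<^sub>R A $ j)) ` ((UNIV - {i}) \<times> {-1, 1::real})"
  assume none: "\<not> ?thesis"
  have "sign_vectors \<subseteq> ?excluded"
  proof
    fix x :: "real^'n" assume x: "x \<in> sign_vectors"
    then obtain j where j: "j \<noteq> i" "?r \<le> \<bar>A $ j \<bullet> x\<bar>"
      using none by force
    have nx: "norm x = ?r" and nj: "norm (A $ j) = 1"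
      using norm_sign_vector[OF x] assms(1) by (auto simp: unit_rows_def)
    then have "\<bar>A $ j \<bullet> x\<bar> = norm (A $ j) * norm x"
      using j Cauchy_Schwarz_ineq2[of "A $ j" x] by simp
    then have "norm (A $ j) *\<^sub>R x = norm x *\<^sub>R A $ j \<or> norm (A $ j) *\<^sub>R x = - norm x *\<^sub>R A $ j"
      using norm_cauchy_schwarz_abs_eq by blast
    then have "x = 1 *\<^sub>R (?r *\<^sub>R A $ j) \<or> x = (-1) *\<^sub>R (?r *\<^sub>R A $ j)"
      using nx nj by simp
    then show "x \<in> ?excluded" using j by force
  qed
  then have "card (sign_vectors :: (real^'n) set) \<le> card ?excluded"
    by (intro card_mono) auto
  also have "\<dots> \<le> card ((UNIV - {i}) \<times> {-1, 1::real})" by (rule card_image_le) simp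
  also have "\<dots> = 2 * (CARD('m) - 1)" by (simp add: card_cartesian_product)
  finally have "2 ^ CARD('n) \<le> 2 * (CARD('n) - 1)"
    using assms(2) by (simp add: card_sign_vectors)
  moreover have "2 * CARD('n) \<le> 2 ^ CARD('n)" by (rule double_le_two_power)
  moreover have "CARD('n) > 0" by simp
  ultimately show False by linarith
qed

text \<open>If \<open>v\<^sub>i = 0\<close>, row \<open>i\<close> can be replaced by \<open>\<plusminus>x/\<surd>n\<close>, where all other rows are small at
  the sign vector \<open>x\<close>; tightness at \<open>x\<close> then forces the recorded sign to be both \<open>1\<close> and \<open>-1\<close>.\<close>
lemma beta_maximizer_pattern_vector_nonzero:
  fixes A :: "real^'n::finite^'m::finite"
  assumes A: "beta_maximizer A" and mn: "CARD('m) \<le> CARD('n)"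
  shows "pattern_vector (sign_pattern A) i \<noteq> 0"
proof
  let ?r = "sqrt (real CARD('n))"
  assume v0: "pattern_vector (sign_pattern A) i = 0"
  have uA: "unit_rows A" using A by (simp add: beta_maximizer_def)
  obtain x where x: "x \<in> sign_vectors" and small: "\<And>j. j \<noteq> i \<Longrightarrow> \<bar>A $ j \<bullet> x\<bar> < ?r"
    using exists_sign_vector_small_off_row[OF uA mn] by blast
  have r: "?r > 0" by simp
  define c where "c = (1 / ?r) *\<^sub>R x"
  have nc: "norm c = 1" and cx: "c \<bullet> x = ?r"
    using r norm_sign_vector[OF x] by (auto simp: c_def real_div_sqrt simp flip: power2_norm_eq_inner)
  define k where "k = fst (sign_pattern A x)"
  define \<sigma> where "\<sigma> = snd (sign_pattern A x)"
  have bound: "?r \<le> \<sigma> * ((if k = i then d else A $ k) \<bullet> x)"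
    if "norm d = 1" "?r \<le> \<bar>d \<bullet> x\<bar>" for d
  proof -
    define B where "B = (\<chi> j. if j = i then d else A $ j)"
    have "unit_rows B" using uA that(1) by (auto simp: unit_rows_def B_def)
    moreover have "(\<Sum>j\<in>UNIV. A $ j \<bullet> pattern_vector (sign_pattern A) j)
                 = (\<Sum>j\<in>UNIV. B $ j \<bullet> pattern_vector (sign_pattern A) j)"
      by (intro sum.cong) (auto simp: B_def v0)
    ultimately have "\<sigma> * (B $ k \<bullet> x) = inf_norm (B *v x)"
      using beta_maximizer_pattern_tight[OF A _ _ x] by (simp add: k_def \<sigma>_def)
    moreover have "?r \<le> inf_norm (B *v x)"
      using that(2) abs_row_inner_le_inf_norm[of B i x] by (simp add: B_def)
    ultimately show ?thesis by (simp add: B_def)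
  qed
  have \<sigma>: "\<sigma> = 1 \<or> \<sigma> = -1" by (simp add: \<sigma>_def sign_pattern_def x max_row_sign_def)
  show False
  proof (cases "k = i")
    case True
    then show False using bound[OF nc] bound[of "-c"] nc cx r \<sigma> by auto
  next
    case False
    then have "?r \<le> \<sigma> * (A $ k \<bullet> x)" using bound[OF nc] cx by simp
    also have "\<dots> \<le> \<bar>A $ k \<bullet> x\<bar>" using \<sigma> by auto
    also have "\<dots> < ?r" using small False by blast
    finally show False by simp
  qed
qed

lemma beta_maximizer_eq_pattern_matrix:
  fixes A :: "real^'n::finite^'m::finite"
  assumes A: "beta_maximizer A" and mn: "CARD('m) \<le> CARD('n)"
  shows "pattern_matrix (sign_pattern A) = A"
proof -
  define v where "v = pattern_vector (sign_pattern A)"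
  define B where "B = pattern_matrix (sign_pattern A)"
  have nz: "v i \<noteq> 0" for i
    using beta_maximizer_pattern_vector_nonzero[OF A mn] by (simp add: v_def)
  have nA: "norm (A $ i) = 1" for i
    using A by (simp add: beta_maximizer_def unit_rows_def)
  have Bi: "B $ i = sgn (v i)" for i by (simp add: B_def pattern_matrix_def v_def)
  have uB: "unit_rows B" using nz by (simp add: unit_rows_def Bi norm_sgn)
  have Bv: "B $ i \<bullet> v i = norm (v i)" for i
    using nz[of i] by (simp add: Bi sgn_div_norm flip: power2_norm_eq_inner) (simp add: power2_eq_square)
  have Av: "A $ i \<bullet> v i \<le> norm (v i)" for i
    using norm_cauchy_schwarz[of "A $ i" "v i"] nA by simp
  have "(\<Sum>i\<in>UNIV. norm (v i)) = (\<Sum>i\<in>UNIV. B $ i \<bullet> v i)" by (simp add: Bv)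
  also have "\<dots> \<le> (\<Sum>x\<in>sign_vectors. inf_norm (B *v x))"
    unfolding v_def by (rule sum_inner_pattern_vector_le)
  also have "\<dots> \<le> (\<Sum>x\<in>sign_vectors. inf_norm (A *v x))"
    using A uB by (simp add: beta_maximizer_def flip: beta_le_beta_iff)
  also have "\<dots> = (\<Sum>i\<in>UNIV. A $ i \<bullet> v i)"
    unfolding v_def by (rule sum_inner_pattern_vector_self[symmetric])
  finally have "(\<Sum>i\<in>UNIV. norm (v i)) \<le> (\<Sum>i\<in>UNIV. A $ i \<bullet> v i)" .
  then have "A $ i \<bullet> v i = norm (v i)" for i
    using sum_strict_mono_ex1[of UNIV "\<lambda>i. A $ i \<bullet> v i" "\<lambda>i. norm (v i)"] Av
    by (meson finite UNIV_I leD order.not_eq_order_implies_strict)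
  then have vA: "v i = norm (v i) *\<^sub>R A $ i" for i
    using nA norm_cauchy_schwarz_eq[of "A $ i" "v i"] by simp
  have "sgn (v i) = A $ i" for i
  proof -
    have "sgn (v i) = sgn (norm (v i)) *\<^sub>R sgn (A $ i)" by (metis vA sgn_scaleR)
    then show ?thesis using nz[of i] nA[of i] by (simp add: sgn_div_norm)
  qed
  then show ?thesis by (simp add: pattern_matrix_def v_def vec_eq_iff)
qed

lemma card_beta_maximizers_le:
  assumes "CARD('m) \<le> CARD('n::finite)"
  shows "finite {A :: real^'n^'m::finite. beta_maximizer A}
       \<and> card {A :: real^'n^'m. beta_maximizer A} \<le> (2 * CARD('m)) ^ 2 ^ CARD('n)"
proof -
  let ?P = "PiE (sign_vectors :: (real^'n) set) (\<lambda>_. (UNIV :: 'm set) \<times> {-1, 1::real})"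
  have sub: "{A :: real^'n^'m. beta_maximizer A} \<subseteq> pattern_matrix ` ?P"
    using beta_maximizer_eq_pattern_matrix[OF _ assms] sign_pattern_in_PiE
    by (metis (mono_tags) image_eqI mem_Collect_eq subsetI)
  have "finite ?P" by (simp add: finite_PiE)
  have pairs: "card ((UNIV :: 'm set) \<times> {-1, 1::real}) = 2 * CARD('m)"
    by (simp add: card_cartesian_product)
  have "card ?P = card ((UNIV :: 'm set) \<times> {-1, 1::real}) ^ card (sign_vectors :: (real^'n) set)"
    by (simp add: card_PiE)
  also have "\<dots> = (2 * CARD('m)) ^ 2 ^ CARD('n)"
    by (simp only: pairs card_sign_vectors)
  finally have "card ?P = (2 * CARD('m)) ^ 2 ^ CARD('n)" .
  moreover have "card {A :: real^'n^'m. beta_maximizer A} \<le> card ?P"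
    using card_mono[OF finite_imageI[OF \<open>finite ?P\<close>] sub] card_image_le[OF \<open>finite ?P\<close>]
    by (rule order_trans)
  ultimately show ?thesis
    using sub \<open>finite ?P\<close> by (auto intro: finite_subset)
qed

theorem corollary3:
  fixes n_type :: "'n::finite itself"
  defines "M \<equiv> {A :: real^'n^'n. unit_rows A \<and>
                   (\<forall>B :: real^'n^'n. unit_rows B \<longrightarrow> beta B \<le> beta A)}"
  shows "finite M \<and> card M \<le> 2 ^ (CARD('n) * 2 ^ CARD('n))"
proof -
  have M: "M = {A :: real^'n^'n. beta_maximizer A}"
    by (simp add: M_def beta_maximizer_def)
  have "(2 * CARD('n)) ^ 2 ^ CARD('n) \<le> (2 ^ CARD('n)) ^ 2 ^ CARD('n)"
    by (rule power_mono[OF double_le_two_power]) simp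
  then show ?thesis
    using card_beta_maximizers_le[where 'm='n and 'n='n] by (simp add: M power_mult)
qed

end
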